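(* Let $0<\alpha\le 5\pi/6$ and let $u,v\in V$ with $\{u,v\}\in E$ (i.e. $d(u,v)\le R$). Then either $\{u,v\}\in E_\alpha$, or there exist $u',v'\in V$ such that (a) $d(u',v')<d(u,v)$, (b) $u'=u$ or $\{u,u'\}\in E_\alpha$, and (c) $v'=v$ or $\{v,v'\}\in E_\alpha$.
   Context: Let $V$ be a finite set of pairwise distinct points (nodes) in the Euclidean plane, $d$ the Euclidean distance, and $R>0$. Let $G_R=(V,E)$ be the undirected graph with $E=\{\{u,v\}: u\neq v,\ d(u,v)\le R\}$. Fix a finite increasing sequence of radius levels $0<r_1<r_2<\dots<r_k=R$. For $u\in V$ and $1\le i\le k$ let $S_i(u)=\{v\in V\setminus\{u\}: d(u,v)\le r_i\}$. For $0<\alpha<2\pi$, a closed cone of width $\alpha$ with apex $u$ is a set $\{u+t(\cos\varphi,\sin\varphi): t\ge 0,\ \varphi\in[\theta-\alpha/2,\theta+\alpha/2]\}$ for some $\theta$. A finite set $S\subseteq V\setminus\{u\}$ has an $\alpha$-gap (at $u$) if some closed cone of width $\alpha$ with apex $u$ contains no node of $S$ (in particular $\emptyset$ has an $\alpha$-gap). The algorithm CBTC($\alpha$) assigns to each $u$ the index $i_u$ = the least $i\in\{1,\dots,k\}$ such that $S_i(u)$ has no $\alpha$-gap, or $i_u=k$ if there is no such $i$; set $N_\alpha(u)=S_{i_u}(u)$ and $N_\alpha=\{(u,v): v\in N_\alpha(u)\}$. Let $E_\alpha=\{\{u,v\}: (u,v)\in N_\alpha \text{ or } (v,u)\in N_\alpha\}$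 (the symmetric closure of $N_\alpha$) and $G_\alpha=(V,E_\alpha)$. *)

theory Defs
  imports "HOL-Analysis.Analysis"
begin

text \<open>Points of the Euclidean plane are modelled as complex numbers; dist is the Euclidean distance.
  Radius levels are r 1 < ... < r k = R, given as a function r :: nat \<Rightarrow> real on {1..k}.\<close>

definition S_lvl :: "complex set \<Rightarrow> (nat \<Rightarrow> real) \<Rightarrow> nat \<Rightarrow> complex \<Rightarrow> complex set" where
  "S_lvl V r i u = {v \<in> V - {u}. dist u v \<le> r i}"

definition cone :: "complex \<Rightarrow> real \<Rightarrow> real \<Rightarrow> complex set" where
  "cone u \<alpha> \<theta> = {u + of_real t * cis \<phi> | t \<phi>. t \<ge> 0 \<and> \<theta> - \<alpha>/2 \<le> \<phi> \<and> \<phi> \<le> \<theta> + \<alpha>/2}"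

definition has_gap :: "complex \<Rightarrow> real \<Rightarrow> complex set \<Rightarrow> bool" where
  "has_gap u \<alpha> S \<longleftrightarrow> (\<exists>\<theta>. S \<inter> cone u \<alpha> \<theta> = {})"

definition cbtc_index :: "complex set \<Rightarrow> (nat \<Rightarrow> real) \<Rightarrow> nat \<Rightarrow> real \<Rightarrow> complex \<Rightarrow> nat" where
  "cbtc_index V r k \<alpha> u =
     (if \<exists>i\<in>{1..k}. \<not> has_gap u \<alpha> (S_lvl V r i u)
      then (LEAST i. i \<in> {1..k} \<and> \<not> has_gap u \<alpha> (S_lvl V r i u))
      else k)"

definition N_alpha :: "complex set \<Rightarrow> (nat \<Rightarrow> real) \<Rightarrow> nat \<Rightarrow> real \<Rightarrow> complex \<Rightarrow> complex set" where
  "N_alpha V r k \<alpha> u = S_lvl V r (cbtc_index V r k \<alpha> u) u"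

definition E_alpha :: "complex set \<Rightarrow> (nat \<Rightarrow> real) \<Rightarrow> nat \<Rightarrow> real \<Rightarrow> complex \<Rightarrow> complex \<Rightarrow> bool" where
  "E_alpha V r k \<alpha> u v \<longleftrightarrow> v \<in> N_alpha V r k \<alpha> u \<or> u \<in> N_alpha V r k \<alpha> v"

end

theory Submission
  imports Defs
begin

text \<open>
  If neither endpoint keeps the edge, both CBTC neighbourhoods N(u) and N(v) are gap-free and
  consist of nodes strictly closer than d(u,v); were the claim false, they would moreover be at
  distance at least d(u,v) from the opposite endpoint, which puts every such node at an angle
  greater than \<pi>/3 from the segment uv. Gap-freeness at u yields nodes of N(u) on both sides of
  the line uv whose angles seen from u differ by at most \<alpha>; likewise at v. The two resulting
  cross sums of angles add up to at most 2\<alpha> \<le> 5\<pi>/3, so some p \<in> N(u) and q \<in> N(v) on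
  the same side make angles \<phi>, \<psi> with uv at u and v with \<phi> + \<psi> \<le> 5\<pi>/6, and an elementary
  trigonometric estimate then gives d(p,q) < d(u,v).
\<close>

lemma affine_neg_between:
  fixes m n lo hi x :: real
  assumes "lo \<le> x" "x \<le> hi" "m * lo + n < 0" "m * hi + n < 0"
  shows "m * x + n < 0"
proof (cases "0 \<le> m")
  case True
  then have "m * x \<le> m * hi" using assms by (simp add: mult_left_mono)
  then show ?thesis using assms by linarith
next
  case False
  then have "m * x \<le> m * lo" using assms by (simp add: mult_left_mono_neg)
  then show ?thesis using assms by linarith
qed

lemma bilinear_neg_on_box:
  fixes g :: "real \<Rightarrow> real \<Rightarrow> real"
  assumes g: "\<And>a b. g a b = k * a * b + l * a + m * b + n"
    and a: "a0 \<le> a" "a \<le> a1" and b: "b0 \<le> b" "b \<le> b1"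
    and "g a0 b0 < 0" "g a0 b1 < 0" "g a1 b0 < 0" "g a1 b1 < 0"
  shows "g a b < 0"
proof -
  have "g a' b < 0" if "a' = a0 \<or> a' = a1" for a'
    using affine_neg_between[OF b, of "k * a' + m" "l * a' + n"] that assms(6-9)
    by (auto simp: g algebra_simps)
  then show ?thesis
    using affine_neg_between[OF a, of "k * b + l" "m * b + n"] by (simp add: g algebra_simps)
qed

lemma sin_plus_cos_gt_one:
  fixes x :: real
  assumes "0 < x" "x < pi/2"
  shows "1 < sin x + cos x"
proof -
  have pos: "0 < sin x" "0 < cos x" using assms by (auto intro: sin_gt_zero cos_gt_zero_pi)
  have "(sin x + cos x)^2 = 1 + 2 * sin x * cos x"
    using sin_cos_squared_add[of x] by (simp add: power2_sum)
  also have "\<dots> > 1^2" using pos by simp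
  finally show ?thesis
    by (rule power2_less_imp_less) (use pos in linarith)
qed

lemma cos_corner_neg:
  fixes \<phi> \<psi> :: real
  assumes "pi/3 < \<phi>" "pi/3 < \<psi>" "\<phi> + \<psi> \<le> 5*pi/6"
  shows "1 + 4 * cos \<psi> * cos (\<phi> + \<psi>) - 2 * cos \<phi> < 0"
proof -
  have "2 * cos \<psi> * cos (\<phi> + \<psi>) = cos \<phi> + cos (\<phi> + 2*\<psi>)"
    using cos_times_cos[of \<psi> "\<phi> + \<psi>"] by (simp add: algebra_simps)
  moreover have "cos (pi/3) < cos (\<phi> + 2*\<psi> - pi)"
    by (rule cos_monotone_0_pi) (use assms in auto)
  then have "cos (\<phi> + 2*\<psi>) < -1/2" by (simp add: cos_60 cos_diff)
  ultimately show ?thesis by linarith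
qed

lemma pi_third_lt_if_cos_lt_half:
  fixes x :: real
  assumes "0 \<le> x" "x \<le> pi" "cos x < 1/2"
  shows "pi/3 < x"
proof (rule ccontr)
  assume "\<not> pi/3 < x"
  then have "cos (pi/3) \<le> cos x" using assms by (intro cos_monotone_0_pi_le) auto
  then show False using assms cos_60 by simp
qed

lemma bilinear_bound_neg:
  fixes a b c \<phi> \<psi> :: real
  assumes thirds: "pi/3 < \<phi>" "pi/3 < \<psi>" and sum: "\<phi> + \<psi> \<le> 5*pi/6" and "0 < c"
    and a: "2 * c * cos \<phi> \<le> a" "a \<le> c" and b: "2 * c * cos \<psi> \<le> b" "b \<le> c"
  shows "2 * cos (\<phi> + \<psi>) * a * b + c * a + c * b - 2 * c^2 * (cos \<phi> + cos \<psi>) < 0"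
proof -
  define C where "C = cos (\<phi> + \<psi>)"
  define g where "g a b = 2 * C * a * b + c * a + c * b - 2 * c^2 * (cos \<phi> + cos \<psi>)" for a b
  have "\<phi> < pi/2" "\<psi> < pi/2" using thirds sum by auto
  then have "0 < cos \<phi>" "0 < cos \<psi>" "0 < sin \<phi>" using thirds by (auto intro: cos_gt_zero_pi sin_gt_zero)
  have "C < 0"
    unfolding C_def using cos_monotone_0_pi[of "pi/2" "\<phi> + \<psi>"] thirds sum by auto
  have "g a b < 0"
  proof (rule bilinear_neg_on_box[of g])
    show "g a b = 2 * C * a * b + c * a + c * b + - 2 * c^2 * (cos \<phi> + cos \<psi>)" for a b
      unfolding g_def by simp
    show "2 * c * cos \<phi> \<le> a" "a \<le> c" "2 * c * cos \<psi> \<le> b" "b \<le> c" using a b .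
    have "g (2 * c * cos \<phi>) (2 * c * cos \<psi>) = 8 * c^2 * (cos \<phi> * cos \<psi> * C)"
      unfolding g_def by (simp add: power2_eq_square algebra_simps)
    then show "g (2 * c * cos \<phi>) (2 * c * cos \<psi>) < 0"
      using \<open>0 < c\<close> \<open>0 < cos \<phi>\<close> \<open>0 < cos \<psi>\<close> \<open>C < 0\<close> by (simp add: mult_pos_neg)
    have "g (2 * c * cos \<phi>) c = c^2 * (1 + 4 * cos \<phi> * C - 2 * cos \<psi>)"
      unfolding g_def by (simp add: power2_eq_square algebra_simps)
    moreover have "1 + 4 * cos \<phi> * C - 2 * cos \<psi> < 0"
      using cos_corner_neg[of \<psi> \<phi>] thirds sum by (simp add: C_def add.commute)
    ultimately show "g (2 * c * cos \<phi>) c < 0" using \<open>0 < c\<close> by (simp add: mult_pos_neg)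
    have "g c (2 * c * cos \<psi>) = c^2 * (1 + 4 * cos \<psi> * C - 2 * cos \<phi>)"
      unfolding g_def by (simp add: power2_eq_square algebra_simps)
    moreover have "1 + 4 * cos \<psi> * C - 2 * cos \<phi> < 0"
      using cos_corner_neg[of \<phi> \<psi>] thirds sum by (simp add: C_def)
    ultimately show "g c (2 * c * cos \<psi>) < 0" using \<open>0 < c\<close> by (simp add: mult_pos_neg)
    have "g c c = 2 * c^2 * ((1 - cos \<phi>) * (1 - cos \<psi>) - sin \<phi> * sin \<psi>)"
      unfolding g_def C_def cos_add by (simp add: power2_eq_square algebra_simps)
    moreover have "(1 - cos \<phi>) * (1 - cos \<psi>) < sin \<phi> * sin \<psi>"
      using sin_plus_cos_gt_one[of \<phi>] sin_plus_cos_gt_one[of \<psi>] thirds \<open>\<phi> < pi/2\<close> \<open>\<psi> < pi/2\<close>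
        cos_le_one \<open>0 < sin \<phi>\<close>
      by (intro mult_strict_mono) auto
    ultimately show "g c c < 0" using \<open>0 < c\<close> by (simp add: mult_pos_neg)
  qed
  then show ?thesis unfolding g_def C_def .
qed

lemma polar_dist_lt_base:
  fixes a b c \<phi> \<psi> :: real
  assumes a: "0 < a" "a < c" and b: "0 < b" "b < c"
    and angles: "0 < \<phi>" "0 < \<psi>" "\<phi> + \<psi> \<le> 5*pi/6"
    and far_a: "2 * c * cos \<phi> \<le> a" and far_b: "2 * c * cos \<psi> \<le> b"
  shows "(a * cos \<phi> + b * cos \<psi> - c)^2 + (a * sin \<phi> - b * sin \<psi>)^2 < c^2"
proof -
  have "0 < c" using a by simp
  have below_half: "cos \<theta> < 1/2" if "2 * c * cos \<theta> \<le> r" "r < c" for r \<theta>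
  proof -
    have "c * (2 * cos \<theta>) < c * 1" using that by (simp only: mult.assoc[symmetric])
    then show ?thesis using \<open>0 < c\<close> by (subst (asm) mult_less_cancel_left_pos) auto
  qed
  have "cos \<phi> < 1/2" "cos \<psi> < 1/2" using below_half far_a far_b a b by blast+
  then have thirds: "pi/3 < \<phi>" "pi/3 < \<psi>"
    using pi_third_lt_if_cos_lt_half[of \<phi>] pi_third_lt_if_cos_lt_half[of \<psi>] angles pi_gt_zero
    by linarith+
  let ?a0 = "2 * c * cos \<phi>" and ?b0 = "2 * c * cos \<psi>"
  have "(a * cos \<phi> + b * cos \<psi> - c)^2 + (a * sin \<phi> - b * sin \<psi>)^2 - c^2
      = a * (a - ?a0) + b * (b - ?b0) + 2 * cos (\<phi> + \<psi>) * a * b"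
    unfolding cos_add using sin_cos_squared_add[of \<phi>] sin_cos_squared_add[of \<psi>] by algebra
  also have "\<dots> \<le> c * (a - ?a0) + c * (b - ?b0) + 2 * cos (\<phi> + \<psi>) * a * b"
  proof -
    have "a * (a - ?a0) \<le> c * (a - ?a0)" "b * (b - ?b0) \<le> c * (b - ?b0)"
      using a b far_a far_b by (auto intro: mult_right_mono)
    then show ?thesis by linarith
  qed
  also have "\<dots> < 0"
    using bilinear_bound_neg[OF thirds angles(3) \<open>0 < c\<close> far_a _ far_b] a b
    by (simp add: power2_eq_square algebra_simps)
  finally show ?thesis by simp
qed

lemma le_norm_diff_of_real_iff:
  fixes z :: complex and c :: real
  assumes "0 \<le> c"
  shows "c \<le> norm (z - of_real c) \<longleftrightarrow> 2 * c * Re z \<le> (norm z)^2"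
proof -
  have "(norm (z - of_real c))^2 = (norm z)^2 - 2 * c * Re z + c^2"
    by (simp add: cmod_power2 power2_diff algebra_simps)
  then show ?thesis
    using abs_le_square_iff[of c "norm (z - of_real c)"] assms by simp
qed

lemma norm_add_sub_of_real_lt:
  fixes z z' :: complex and c :: real
  assumes im: "0 < Im z" "Im z' < 0" and ang: "Arg z - Arg z' \<le> 5*pi/6"
    and z: "norm z < c" "c \<le> norm (z - of_real c)"
    and z': "norm z' < c" "c \<le> norm (z' - of_real c)"
  shows "norm (z + z' - of_real c) < c"
proof -
  define a where "a = norm z"
  define b where "b = norm z'"
  define \<phi> where "\<phi> = Arg z"
  define \<psi> where "\<psi> = - Arg z'"
  have "z = rcis a \<phi>" "z' = rcis b (- \<psi>)"
    unfolding a_def b_def \<phi>_def \<psi>_def by (simp_all add: rcis_cmod_Arg)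
  then have polar: "Re z = a * cos \<phi>" "Im z = a * sin \<phi>" "Re z' = b * cos \<psi>" "Im z' = - (b * sin \<psi>)"
    by simp_all
  have "0 < a" "0 < b" using im unfolding a_def b_def by auto
  have "0 < \<phi>" "0 < \<psi>" using im Arg_lt_pi[of z] Arg_neg_iff[of z'] unfolding \<phi>_def \<psi>_def by auto
  have "0 < c" using z(1) norm_ge_zero[of z] by linarith
  have far: "2 * c * cos \<theta> \<le> r" if "0 < r" "2 * c * (r * cos \<theta>) \<le> r^2" for r \<theta>
  proof -
    have "r * (2 * c * cos \<theta>) \<le> r * r" using that(2) by (simp add: power2_eq_square mult_ac)
    then show ?thesis using that(1) by (simp add: mult_le_cancel_left_pos)
  qed
  have "2 * c * Re z \<le> (norm z)^2" "2 * c * Re z' \<le> (norm z')^2"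
    using le_norm_diff_of_real_iff[of c] z(2) z'(2) \<open>0 < c\<close> by auto
  then have far_a: "2 * c * cos \<phi> \<le> a" and far_b: "2 * c * cos \<psi> \<le> b"
    using far[OF \<open>0 < a\<close>, of \<phi>] far[OF \<open>0 < b\<close>, of \<psi>] unfolding polar a_def b_def by auto
  have "(norm (z + z' - of_real c))^2 = (a * cos \<phi> + b * cos \<psi> - c)^2 + (a * sin \<phi> - b * sin \<psi>)^2"
    by (simp add: cmod_power2 polar)
  also have "\<dots> < c^2"
  proof (rule polar_dist_lt_base)
    show "0 < a" "a < c" "0 < b" "b < c" using \<open>0 < a\<close> \<open>0 < b\<close> z z' a_def b_def by auto
    show "0 < \<phi>" "0 < \<psi>" "\<phi> + \<psi> \<le> 5*pi/6" using \<open>0 < \<phi>\<close> \<open>0 < \<psi>\<close> ang \<phi>_def \<psi>_def by auto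
    show "2 * c * cos \<phi> \<le> a" "2 * c * cos \<psi> \<le> b" using far_a far_b .
  qed
  finally show ?thesis using \<open>0 < c\<close> by (simp add: power2_less_imp_less)
qed

definition frame :: "complex \<Rightarrow> complex \<Rightarrow> complex \<Rightarrow> complex" where
  "frame u v x = (x - u) * (of_real (dist u v) / (v - u))"

lemma dist_frame:
  assumes "u \<noteq> v"
  shows "dist (frame u v x) (frame u v y) = dist x y"
proof -
  have "frame u v x - frame u v y = (x - y) * (of_real (dist u v) / (v - u))"
    unfolding frame_def by (simp add: algebra_simps del: times_divide_eq_right)
  moreover have "norm (of_real (dist u v) / (v - u)) = 1"
    using assms by (simp add: norm_divide dist_norm norm_minus_commute)
  ultimately show ?thesis unfolding dist_norm by (metis norm_mult mult_1_right)
qed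

lemma frame_source [simp]: "frame u v u = 0"
  by (simp add: frame_def)

lemma frame_target: "u \<noteq> v \<Longrightarrow> frame u v v = of_real (dist u v)"
  by (simp add: frame_def)

lemma frame_swap: "u \<noteq> v \<Longrightarrow> frame v u x = of_real (dist u v) - frame u v x"
  by (simp add: frame_def dist_commute field_simps)

lemma cone_translate_mult:
  assumes "w \<noteq> 0" "x \<in> cone u \<alpha> \<theta>"
  shows "(x - u) * w \<in> cone 0 \<alpha> (\<theta> + Arg w)"
proof -
  obtain t \<phi> where x: "x = u + of_real t * cis \<phi>" "0 \<le> t" "\<theta> - \<alpha>/2 \<le> \<phi>" "\<phi> \<le> \<theta> + \<alpha>/2"
    using assms(2) unfolding cone_def by blast
  have "(x - u) * w = of_real t * cis \<phi> * (of_real (norm w) * cis (Arg w))"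
    using x(1) rcis_cmod_Arg[of w] by (simp add: rcis_def)
  also have "\<dots> = of_real (t * norm w) * cis (\<phi> + Arg w)"
    by (simp add: cis_mult mult_ac)
  finally have "(x - u) * w = of_real (t * norm w) * cis (\<phi> + Arg w)" .
  then show ?thesis
    unfolding cone_def using x by (intro CollectI exI[of _ "t * norm w"] exI[of _ "\<phi> + Arg w"]) auto
qed

lemma no_gap_frame:
  assumes "u \<noteq> v" "\<not> has_gap u \<alpha> A"
  shows "\<not> has_gap 0 \<alpha> (frame u v ` A)"
  unfolding has_gap_def
proof
  assume "\<exists>\<theta>. frame u v ` A \<inter> cone 0 \<alpha> \<theta> = {}"
  then obtain \<theta> where empty: "frame u v ` A \<inter> cone 0 \<alpha> \<theta> = {}" by blast
  let ?w = "of_real (dist u v) / (v - u)"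
  have "?w \<noteq> 0" using assms(1) by simp
  obtain x where "x \<in> A" "x \<in> cone u \<alpha> (\<theta> - Arg ?w)"
    using assms(2) unfolding has_gap_def by blast
  then have "frame u v x \<in> frame u v ` A \<inter> cone 0 \<alpha> \<theta>"
    using cone_translate_mult[OF \<open>?w \<noteq> 0\<close>] unfolding frame_def by fastforce
  then show False using empty by blast
qed

lemma no_gap_Arg_within:
  assumes "\<not> has_gap 0 \<alpha> A" "0 \<notin> A" "- pi < \<theta> - \<alpha>/2" "\<theta> + \<alpha>/2 \<le> pi"
  shows "\<exists>z\<in>A. \<theta> - \<alpha>/2 \<le> Arg z \<and> Arg z \<le> \<theta> + \<alpha>/2"
proof -
  obtain z where "z \<in> A" "z \<in> cone 0 \<alpha> \<theta>" using assms(1) unfolding has_gap_def by blast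
  then obtain t \<phi> where z: "z = of_real t * cis \<phi>" "0 \<le> t" "\<theta> - \<alpha>/2 \<le> \<phi>" "\<phi> \<le> \<theta> + \<alpha>/2"
    unfolding cone_def by auto
  have "0 < t" using z \<open>z \<in> A\<close> assms(2) by (cases "t = 0") auto
  then have "Arg z = \<phi>" using z assms(3,4) by (intro Arg_unique'[of t]) (auto simp: rcis_def)
  then show ?thesis using z(3,4) \<open>z \<in> A\<close> by blast
qed

lemma no_gap_meets_half_planes:
  assumes "\<alpha> < pi" "\<not> has_gap 0 \<alpha> A" "0 \<notin> A"
  shows "\<exists>z\<in>A. 0 < Im z" and "\<exists>z\<in>A. Im z < 0"
proof -
  obtain z where "z \<in> A" "pi/2 - \<alpha>/2 \<le> Arg z" "Arg z \<le> pi/2 + \<alpha>/2"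
    using no_gap_Arg_within[OF assms(2,3), of "pi/2"] assms(1) pi_gt_zero by auto
  then show "\<exists>z\<in>A. 0 < Im z" using assms(1) Arg_lt_pi[of z] by auto
  obtain z' where "z' \<in> A" "Arg z' \<le> - pi/2 + \<alpha>/2"
    using no_gap_Arg_within[OF assms(2,3), of "- pi/2"] assms(1) pi_gt_zero by auto
  then show "\<exists>z\<in>A. Im z < 0" using assms(1) Arg_neg_iff[of z'] by auto
qed

lemma no_gap_Arg_pair:
  fixes A :: "complex set"
  assumes "finite A" "\<alpha> < pi" and no_gap: "\<not> has_gap 0 \<alpha> A"
    and off_axis: "\<And>z. z \<in> A \<Longrightarrow> Arg z \<noteq> 0"
  shows "\<exists>z1\<in>A. \<exists>z2\<in>A. 0 < Im z1 \<and> Im z2 < 0 \<and> Arg z1 - Arg z2 \<le> \<alpha>"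
proof -
  have "0 \<notin> A" using off_axis Arg_zero by auto
  define U where "U = {z\<in>A. 0 < Im z}"
  define L where "L = {z\<in>A. Im z < 0}"
  have "finite U" "finite L" using assms(1) U_def L_def by auto
  have "U \<noteq> {}" "L \<noteq> {}"
    using no_gap_meets_half_planes[OF assms(2) no_gap \<open>0 \<notin> A\<close>] U_def L_def by auto
  obtain z1 where z1: "z1 \<in> U" "\<And>z. z \<in> U \<Longrightarrow> Arg z1 \<le> Arg z"
    using arg_min_if_finite[OF \<open>finite U\<close> \<open>U \<noteq> {}\<close>, of Arg] by (metis not_le)
  obtain z2 where z2: "z2 \<in> L" "\<And>z. z \<in> L \<Longrightarrow> Arg z \<le> Arg z2"
    using arg_min_if_finite[OF \<open>finite L\<close> \<open>L \<noteq> {}\<close>, of "\<lambda>z. - Arg z"] by (metis neg_less_iff_less not_le)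
  have "Arg z1 - Arg z2 \<le> \<alpha>"
  proof (rule ccontr)
    assume wide: "\<not> Arg z1 - Arg z2 \<le> \<alpha>"
    have "Arg z1 < pi" "- pi < Arg z2" using z1 Arg_lt_pi[of z1] mpi_less_Arg[of z2] U_def by auto
    then obtain z where z: "z \<in> A" "Arg z2 < Arg z" "Arg z < Arg z1"
      using no_gap_Arg_within[OF no_gap \<open>0 \<notin> A\<close>, of "(Arg z1 + Arg z2) / 2"] wide
      by (auto simp: field_simps)
    have "Arg z < 0 \<or> 0 < Arg z" using off_axis[OF z(1)] by linarith
    then show False
    proof
      assume "Arg z < 0"
      then have "z \<in> L" using z(1) Arg_neg_iff L_def by auto
      then show False using z2(2) z(2) by force
    next
      assume "0 < Arg z"
      then have "z \<in> U" using z Arg_lt_pi[of z] \<open>Arg z1 < pi\<close> U_def by auto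
      then show False using z1(2) z(3) by force
    qed
  qed
  then show ?thesis using z1 z2 U_def L_def by auto
qed

lemma frame_of_closer_node:
  assumes "p \<noteq> u" "dist u p < dist u v" "dist u v \<le> dist p v"
  shows "norm (frame u v p) < dist u v"
    and "dist u v \<le> norm (frame u v p - of_real (dist u v))"
    and "Arg (frame u v p) \<noteq> 0"
proof -
  have "u \<noteq> v" using assms(2) by auto
  have norm_p: "norm (frame u v p) = dist u p"
    using dist_frame[OF \<open>u \<noteq> v\<close>, of p u] by (simp add: dist_norm norm_minus_commute)
  have norm_pv: "norm (frame u v p - of_real (dist u v)) = dist p v"
    using dist_frame[OF \<open>u \<noteq> v\<close>, of p v] by (simp add: dist_norm frame_target[OF \<open>u \<noteq> v\<close>])
  show "norm (frame u v p) < dist u v" "dist u v \<le> norm (frame u v p - of_real (dist u v))"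
    using assms norm_p norm_pv by auto
  show "Arg (frame u v p) \<noteq> 0"
  proof
    assume "Arg (frame u v p) = 0"
    then obtain t where t: "frame u v p = of_real t" "0 \<le> t"
      by (metis Arg_eq_0 Reals_cases of_real_Re)
    then have "t < dist u v" "dist u v \<le> \<bar>t - dist u v\<bar>"
      using assms norm_p norm_pv by (auto simp flip: of_real_diff)
    then have "t = 0" using t(2) by linarith
    then show False using t norm_p assms(1) by simp
  qed
qed

lemma shorter_link_between_no_gap_sets:
  assumes "u \<noteq> v" "finite A" "finite B" "\<alpha> \<le> 5*pi/6"
    and "\<not> has_gap u \<alpha> A" "\<not> has_gap v \<alpha> B"
    and A: "\<And>p. p \<in> A \<Longrightarrow> p \<noteq> u \<and> dist u p < dist u v \<and> dist u v \<le> dist p v"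
    and B: "\<And>q. q \<in> B \<Longrightarrow> q \<noteq> v \<and> dist v q < dist v u \<and> dist v u \<le> dist q u"
  shows "\<exists>p\<in>A. \<exists>q\<in>B. dist p q < dist u v"
proof -
  define c where "c = dist u v"
  define A' where "A' = frame u v ` A"
  define B' where "B' = frame v u ` B"
  have nodes: "norm z < c \<and> c \<le> norm (z - of_real c) \<and> Arg z \<noteq> 0" if "z \<in> A' \<union> B'" for z
    using that frame_of_closer_node[of _ u v] frame_of_closer_node[of _ v u] A B
    unfolding A'_def B'_def c_def by (fastforce simp: dist_commute)
  have "\<alpha> < pi" using assms(4) pi_gt_zero by linarith
  obtain a1 a2 where a: "a1 \<in> A'" "a2 \<in> A'" "0 < Im a1" "Im a2 < 0" "Arg a1 - Arg a2 \<le> \<alpha>"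
    using no_gap_Arg_pair[of A' \<alpha>] no_gap_frame[OF assms(1,5)] nodes assms(2) \<open>\<alpha> < pi\<close>
    unfolding A'_def by blast
  obtain b1 b2 where b: "b1 \<in> B'" "b2 \<in> B'" "0 < Im b1" "Im b2 < 0" "Arg b1 - Arg b2 \<le> \<alpha>"
    using no_gap_Arg_pair[of B' \<alpha>] no_gap_frame[OF assms(1)[symmetric] assms(6)] nodes assms(3) \<open>\<alpha> < pi\<close>
    unfolding B'_def by blast
  txt \<open>Seen from v towards u the sides of the line uv are exchanged, so points of A' above the
    axis pair with points of B' below it; the two cross differences of Arg sum to at most 2\<alpha>.\<close>
  have "\<exists>z\<in>A'. \<exists>z'\<in>B'. norm (z + z' - of_real c) < c"
  proof (cases "Arg a1 - Arg b2 \<le> 5*pi/6")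
    case True
    then show ?thesis using norm_add_sub_of_real_lt[of a1 b2] a b nodes by blast
  next
    case False
    then have "Arg b1 - Arg a2 \<le> 5*pi/6" using a b assms(4) by linarith
    then show ?thesis using norm_add_sub_of_real_lt[of b1 a2] a b nodes by (metis UnI1 UnI2 add.commute)
  qed
  then obtain p q where "p \<in> A" "q \<in> B" "norm (frame u v p + frame v u q - of_real c) < c"
    unfolding A'_def B'_def by blast
  moreover have "norm (frame u v p + frame v u q - of_real c) = dist p q"
    using dist_frame[OF assms(1), of p q] by (simp add: frame_swap[OF assms(1)] c_def dist_norm)
  ultimately show ?thesis unfolding c_def by auto
qed

lemma N_alpha_subset: "N_alpha V r k \<alpha> u \<subseteq> V - {u}"
  by (auto simp: N_alpha_def S_lvl_def)

lemma N_alpha_omitting_node: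
  assumes "x \<in> V" "x \<noteq> u" "dist u x \<le> r k" "x \<notin> N_alpha V r k \<alpha> u"
  shows "\<not> has_gap u \<alpha> (N_alpha V r k \<alpha> u)"
    and "\<And>y. y \<in> N_alpha V r k \<alpha> u \<Longrightarrow> dist u y < dist u x"
proof -
  have gap_free: "\<exists>i\<in>{1..k}. \<not> has_gap u \<alpha> (S_lvl V r i u)"
  proof (rule ccontr)
    assume "\<not> ?thesis"
    then have "N_alpha V r k \<alpha> u = S_lvl V r k u" by (simp add: N_alpha_def cbtc_index_def)
    then show False using assms by (simp add: S_lvl_def)
  qed
  define i where "i = (LEAST i. i \<in> {1..k} \<and> \<not> has_gap u \<alpha> (S_lvl V r i u))"
  have "\<not> has_gap u \<alpha> (S_lvl V r i u)"
    unfolding i_def by (rule LeastI2_ex) (use gap_free in auto)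
  moreover have N: "N_alpha V r k \<alpha> u = S_lvl V r i u"
    using gap_free by (simp add: N_alpha_def cbtc_index_def i_def)
  ultimately show "\<not> has_gap u \<alpha> (N_alpha V r k \<alpha> u)" by simp
  show "dist u y < dist u x" if "y \<in> N_alpha V r k \<alpha> u" for y
    using that assms N by (auto simp: S_lvl_def)
qed

theorem lemma1:
  fixes V :: "complex set" and r :: "nat \<Rightarrow> real" and k :: nat and R \<alpha> :: real
    and u v :: complex
  assumes "finite V"
    and "k \<ge> 1" and "0 < r 1" and "\<And>i j. 1 \<le> i \<Longrightarrow> i < j \<Longrightarrow> j \<le> k \<Longrightarrow> r i < r j"
    and "r k = R"
    and "0 < \<alpha>" and "\<alpha> \<le> 5 * pi / 6"
    and "u \<in> V" and "v \<in> V" and "u \<noteq> v" and "dist u v \<le> R"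
  shows "E_alpha V r k \<alpha> u v \<or>
         (\<exists>u'\<in>V. \<exists>v'\<in>V. dist u' v' < dist u v
             \<and> (u' = u \<or> E_alpha V r k \<alpha> u u')
             \<and> (v' = v \<or> E_alpha V r k \<alpha> v v'))"
proof (rule ccontr)
  assume contra: "\<not> ?thesis"
  let ?Nu = "N_alpha V r k \<alpha> u" and ?Nv = "N_alpha V r k \<alpha> v"
  have "v \<notin> ?Nu" "u \<notin> ?Nv" using contra unfolding E_alpha_def by auto
  have "dist u v \<le> r k" "dist v u \<le> r k" using assms(5,11) by (simp_all add: dist_commute)
  note omit_u = N_alpha_omitting_node[OF assms(9) assms(10)[symmetric] \<open>dist u v \<le> r k\<close> \<open>v \<notin> ?Nu\<close>]
  note omit_v = N_alpha_omitting_node[OF assms(8) assms(10) \<open>dist v u \<le> r k\<close> \<open>u \<notin> ?Nv\<close>]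
  have "?Nu \<subseteq> V - {u}" "?Nv \<subseteq> V - {v}" by (rule N_alpha_subset)+
  have no_shorter: "\<not> dist p q < dist u v" if "p = u \<or> p \<in> ?Nu" "q = v \<or> q \<in> ?Nv" for p q
  proof -
    have "p \<in> V" "q \<in> V" "p = u \<or> E_alpha V r k \<alpha> u p" "q = v \<or> E_alpha V r k \<alpha> v q"
      using that \<open>?Nu \<subseteq> V - {u}\<close> \<open>?Nv \<subseteq> V - {v}\<close> assms(8,9) unfolding E_alpha_def by auto
    then show ?thesis using contra by blast
  qed
  have "\<exists>p\<in>?Nu. \<exists>q\<in>?Nv. dist p q < dist u v"
  proof (rule shorter_link_between_no_gap_sets[OF assms(10) _ _ assms(7) omit_u(1) omit_v(1)])
    show "finite ?Nu" "finite ?Nv"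
      using \<open>?Nu \<subseteq> V - {u}\<close> \<open>?Nv \<subseteq> V - {v}\<close> assms(1) by (auto intro: finite_subset)
    show "p \<noteq> u \<and> dist u p < dist u v \<and> dist u v \<le> dist p v" if "p \<in> ?Nu" for p
      using that omit_u(2) no_shorter[of p v] \<open>?Nu \<subseteq> V - {u}\<close> by (auto simp: not_less)
    show "q \<noteq> v \<and> dist v q < dist v u \<and> dist v u \<le> dist q u" if "q \<in> ?Nv" for q
      using that omit_v(2) no_shorter[of u q] \<open>?Nv \<subseteq> V - {v}\<close> by (auto simp: not_less dist_commute)
  qed
  then show False using no_shorter by blast
qed

end
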